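(* The linear span $G^{00}$ of all operators $\bar\Xi^{\lambda_1}_{\lambda_1}\otimes f^{\dot I}_{\dot I}\otimes\Xi^{\lambda_2}_{\lambda_2}$, $\bar\Xi^{\lambda}_{\lambda}\otimes l^{\dot I}_{\dot I}$, $r^{\dot I}_{\dot I}\otimes\Xi^{\lambda}_{\lambda}$ and $\sigma^{\dot I}_{\dot I}$ ($\dot I$ any sequence, $\lambda,\lambda_1,\lambda_2\in\{1,\dots,\Lambda_F\}$) is a Cartan subalgebra of $\hat{G}_{\Lambda,\Lambda_F}$, i.e. a nilpotent subalgebra equal to its own normalizer in $\hat{G}_{\Lambda,\Lambda_F}$ (and these spanning operators are linearly dependent).
   Context: Fix positive integers $\Lambda,\Lambda_F$. A sequence $\dot I=i_1\cdots i_a$ is a finite, possibly empty, sequence of integers in $\{1,\dots,\Lambda\}$; juxtaposition denotes concatenation and $\delta^{\dot I}_{\dot J}$ is $1$ if $\dot I=\dot J$ and $0$ otherwise (similarly for integers). Let $\mathcal{T}_o$ be the complex vector space with basis the symbols $\bar\phi^{\lambda_1}\otimes s^{\dot K}\otimes\phi^{\lambda_2}$, $1\le\lambda_1,\lambda_2\le\Lambda_F$, $\dot K$ any sequence. For all sequences $\dot I,\dot J$ and all $\lambda_i\in\{1,\dots,\Lambda_F\}$ define linear operators on $\mathcal{T}_o$ (each written as a single symbol): first kind: $\bar\Xi^{\lambda_1}_{\lambda_2}\otimes f^{\dot I}_{\dot J}\otimes\Xi^{\lambda_3}_{\lambda_4}(\bar\phi^{\lambda_5}\otimes s^{\dot K}\otimes\phi^{\lambda_6})=\delta^{\lambda_5}_{\lambda_2}\delta^{\dot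 K}_{\dot J}\delta^{\lambda_6}_{\lambda_4}\,\bar\phi^{\lambda_1}\otimes s^{\dot I}\otimes\phi^{\lambda_3}$; second kind: $\bar\Xi^{\lambda_1}_{\lambda_2}\otimes l^{\dot I}_{\dot J}(\bar\phi^{\lambda_3}\otimes s^{\dot K}\otimes\phi^{\lambda_4})=\delta^{\lambda_3}_{\lambda_2}\sum_{\dot K_1\dot K_2=\dot K}\delta^{\dot K_1}_{\dot J}\,\bar\phi^{\lambda_1}\otimes s^{\dot I\dot K_2}\otimes\phi^{\lambda_4}$; third kind: $r^{\dot I}_{\dot J}\otimes\Xi^{\lambda_1}_{\lambda_2}(\bar\phi^{\lambda_3}\otimes s^{\dot K}\otimes\phi^{\lambda_4})=\delta^{\lambda_4}_{\lambda_2}\sum_{\dot K_1\dot K_2=\dot K}\delta^{\dot K_2}_{\dot J}\,\bar\phi^{\lambda_3}\otimes s^{\dot K_1\dot I}\otimes\phi^{\lambda_1}$; fourth kind: $\sigma^{\dot I}_{\dot J}(\bar\phi^{\lambda_1}\otimes s^{\dot K}\otimes\phi^{\lambda_2})=\sum_{\dot K_1\dot K_2\dot K_3=\dot K}\delta^{\dot K_2}_{\dot J}\,\bar\phi^{\lambda_1}\otimes s^{\dot K_1\dot I\dot K_3}\otimes\phi^{\lambda_2}$; sums run over all ways to write $\dot K$ as a concatenation of possibly empty sequences. The open string algebra $\hat{G}_{\Lambda,\Lambda_F}$ is the complex Lie algebra (commutator bracket) of operators on $\mathcal{T}_o$ spanned by all operators of these four kinds. *)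

theory Defs
  imports Complex_Main "HOL-Library.Poly_Mapping"
begin

(* Basis symbols  phibar^l1 (x) s^K (x) phi^l2  are triples (l1, K, l2);
   sequences are nat lists. *)
type_synonym bas = "nat \<times> nat list \<times> nat"
type_synonym vec = "bas \<Rightarrow>\<^sub>0 complex"
type_synonym oper = "vec \<Rightarrow> vec"

definition isseq :: "nat \<Rightarrow> nat list \<Rightarrow> bool" where
  "isseq L I \<longleftrightarrow> set I \<subseteq> {1..L}"

definition Basis :: "nat \<Rightarrow> nat \<Rightarrow> bas set" where
  "Basis L LF = {(a, K, b). a \<in> {1..LF} \<and> b \<in> {1..LF} \<and> isseq L K}"

definition ev :: "bas \<Rightarrow> vec" where
  "ev b = Poly_Mapping.single b 1"

definition cmul :: "complex \<Rightarrow> vec \<Rightarrow> vec" where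
  "cmul c v = Poly_Mapping.map (\<lambda>x. c * x) v"

(* linear extension of a map given on basis symbols; vectors supported outside
   the genuine basis (only possible in the ambient type) are sent to 0 *)
definition lin_ext :: "nat \<Rightarrow> nat \<Rightarrow> (bas \<Rightarrow> vec) \<Rightarrow> oper" where
  "lin_ext L LF f = (\<lambda>v. \<Sum>b\<in>Poly_Mapping.keys v. cmul (Poly_Mapping.lookup v b) (if b \<in> Basis L LF then f b else 0))"

(* first kind: Xibar^l1_l2 (x) f^I_J (x) Xi^l3_l4 *)
definition opF :: "nat \<Rightarrow> nat \<Rightarrow> nat \<Rightarrow> nat \<Rightarrow> nat list \<Rightarrow> nat list \<Rightarrow> nat \<Rightarrow> nat \<Rightarrow> oper" where
  "opF L LF l1 l2 I J l3 l4 = lin_ext L LF (\<lambda>(l5, K, l6).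
     if l5 = l2 \<and> K = J \<and> l6 = l4 then ev (l1, I, l3) else 0)"

(* second kind: Xibar^l1_l2 (x) l^I_J *)
definition opL :: "nat \<Rightarrow> nat \<Rightarrow> nat \<Rightarrow> nat \<Rightarrow> nat list \<Rightarrow> nat list \<Rightarrow> oper" where
  "opL L LF l1 l2 I J = lin_ext L LF (\<lambda>(l3, K, l4).
     if l3 = l2 then (\<Sum>(K1, K2)\<in>{(K1, K2). K1 @ K2 = K}. if K1 = J then ev (l1, I @ K2, l4) else 0)
     else 0)"

(* third kind: r^I_J (x) Xi^l1_l2 *)
definition opR :: "nat \<Rightarrow> nat \<Rightarrow> nat list \<Rightarrow> nat list \<Rightarrow> nat \<Rightarrow> nat \<Rightarrow> oper" where
  "opR L LF I J l1 l2 = lin_ext L LF (\<lambda>(l3, K, l4).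
     if l4 = l2 then (\<Sum>(K1, K2)\<in>{(K1, K2). K1 @ K2 = K}. if K2 = J then ev (l3, K1 @ I, l1) else 0)
     else 0)"

(* fourth kind: sigma^I_J *)
definition opS :: "nat \<Rightarrow> nat \<Rightarrow> nat list \<Rightarrow> nat list \<Rightarrow> oper" where
  "opS L LF I J = lin_ext L LF (\<lambda>(l1, K, l2).
     (\<Sum>(K1, K2, K3)\<in>{(K1, K2, K3). K1 @ K2 @ K3 = K}. if K2 = J then ev (l1, K1 @ I @ K3, l2) else 0))"

definition gens :: "nat \<Rightarrow> nat \<Rightarrow> oper set" where
  "gens L LF =
     {opF L LF l1 l2 I J l3 l4 | l1 l2 l3 l4 I J.
        l1 \<in> {1..LF} \<and> l2 \<in> {1..LF} \<and> l3 \<in> {1..LF} \<and> l4 \<in> {1..LF} \<and> isseq L I \<and> isseq L J}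
   \<union> {opL L LF l1 l2 I J | l1 l2 I J. l1 \<in> {1..LF} \<and> l2 \<in> {1..LF} \<and> isseq L I \<and> isseq L J}
   \<union> {opR L LF I J l1 l2 | l1 l2 I J. l1 \<in> {1..LF} \<and> l2 \<in> {1..LF} \<and> isseq L I \<and> isseq L J}
   \<union> {opS L LF I J | I J. isseq L I \<and> isseq L J}"

definition gens00 :: "nat \<Rightarrow> nat \<Rightarrow> oper set" where
  "gens00 L LF =
     {opF L LF l1 l1 I I l2 l2 | l1 l2 I. l1 \<in> {1..LF} \<and> l2 \<in> {1..LF} \<and> isseq L I}
   \<union> {opL L LF l l I I | l I. l \<in> {1..LF} \<and> isseq L I}
   \<union> {opR L LF I I l l | l I. l \<in> {1..LF} \<and> isseq L I}
   \<union> {opS L LF I I | I. isseq L I}"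

definition cspan :: "oper set \<Rightarrow> oper set" where
  "cspan S = {A. \<exists>F c. finite F \<and> F \<subseteq> S \<and> A = (\<lambda>v. \<Sum>g\<in>F. cmul (c g) (g v))}"

definition lin_dependent :: "oper set \<Rightarrow> bool" where
  "lin_dependent S \<longleftrightarrow> (\<exists>F c. finite F \<and> F \<subseteq> S \<and> (\<exists>g\<in>F. c g \<noteq> 0) \<and>
      (\<lambda>v. \<Sum>g\<in>F. cmul (c g) (g v)) = (\<lambda>v. 0))"

definition br :: "oper \<Rightarrow> oper \<Rightarrow> oper" where
  "br A B = (\<lambda>v. A (B v) - B (A v))"

definition Ghat :: "nat \<Rightarrow> nat \<Rightarrow> oper set" where
  "Ghat L LF = cspan (gens L LF)"

definition G00 :: "nat \<Rightarrow> nat \<Rightarrow> oper set" where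
  "G00 L LF = cspan (gens00 L LF)"

fun lcs :: "oper set \<Rightarrow> nat \<Rightarrow> oper set" where
  "lcs H 0 = H"
| "lcs H (Suc n) = cspan {br x y | x y. x \<in> H \<and> y \<in> lcs H n}"

definition lie_nilpotent :: "oper set \<Rightarrow> bool" where
  "lie_nilpotent H \<longleftrightarrow> (\<exists>n. lcs H n = {(\<lambda>v. 0)})"

definition normalizer :: "oper set \<Rightarrow> oper set \<Rightarrow> oper set" where
  "normalizer G H = {x \<in> G. \<forall>h\<in>H. br x h \<in> H}"

end

theory Submission
  imports Defs "HOL-Library.Function_Algebras" "HOL-Library.Sublist"
begin

(* In the basis phibar^a (x) s^K (x) phi^e every generator acts by a 0/1 matrix, and the
   generators with equal upper and lower indices are exactly those that act diagonally
   (a nonzero entry of Xibar^a_b (x) l^I_J sends J K' to I K', so it lies on the diagonal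
   only if I = J).  Hence G00 consists of commuting diagonal operators and is nilpotent.
   Conversely, the projector Xibar^a_a (x) f^K_K (x) Xi^e_e onto a basis symbol b lies in
   G00, and the commutator of x with it has the same off-diagonal entries in column b as x;
   so an x normalising G00 is diagonal.  Generators outside G00 have zero diagonal, so a
   diagonal element of the span of all generators already lies in G00.  Finally, sorting
   the symbols by the first letter of K gives the linear relation
     Xibar^1_1 (x) l^{}_{} = sum_i Xibar^1_1 (x) l^i_i + sum_l Xibar^1_1 (x) f^{}_{} (x) Xi^l_l. *)

lemma lookup_cmul [simp]: "Poly_Mapping.lookup (cmul c v) b = c * Poly_Mapping.lookup v b"
  unfolding cmul_def by (simp add: Poly_Mapping.map.rep_eq when_def)

lemma lookup_ev: "Poly_Mapping.lookup (ev b) b' = (if b' = b then 1 else 0)"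
  unfolding ev_def by (simp add: Poly_Mapping.lookup_single when_def)

lemma keys_ev [simp]: "Poly_Mapping.keys (ev b) = {b}"
  unfolding ev_def by simp

interpretation vec: vector_space cmul
  by unfold_locales (auto intro!: poly_mapping_eqI simp: lookup_add algebra_simps)

definition scale_oper :: "complex \<Rightarrow> oper \<Rightarrow> oper" where
  "scale_oper c A = (\<lambda>v. cmul c (A v))"

interpretation oper: vector_space scale_oper
  by unfold_locales (auto simp: scale_oper_def vec.vector_space_assms)

lemma sum_fun_apply: "(\<Sum>i\<in>I. f i) x = (\<Sum>i\<in>I. f i x)"
  by (induction I rule: infinite_finite_induct) simp_all

lemma oper_sum_apply: "(\<Sum>g\<in>F. scale_oper (c g) g) = (\<lambda>v. \<Sum>g\<in>F. cmul (c g) (g v))"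
  by (simp add: fun_eq_iff sum_fun_apply scale_oper_def)

lemma cspan_eq_span: "cspan S = oper.span S"
  unfolding cspan_def oper.span_explicit oper_sum_apply by blast

lemma lin_dependent_iff_dependent: "lin_dependent S \<longleftrightarrow> oper.dependent S"
  unfolding lin_dependent_def oper.dependent_explicit oper_sum_apply zero_fun_def by blast

definition entry :: "oper \<Rightarrow> bas \<Rightarrow> bas \<Rightarrow> complex" where
  "entry A b' b = Poly_Mapping.lookup (A (ev b)) b'"

lemma entry_add [simp]: "entry (A + B) b' b = entry A b' b + entry B b' b"
  by (simp add: entry_def lookup_add)

lemma entry_scale [simp]: "entry (scale_oper c A) b' b = c * entry A b' b"
  by (simp add: entry_def scale_oper_def)

lemma entry_zero [simp]: "entry 0 b' b = 0"
  by (simp add: entry_def)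

lemma entry_sum: "entry (\<Sum>i\<in>I. A i) b' b = (\<Sum>i\<in>I. entry (A i) b' b)"
  by (simp add: entry_def sum_fun_apply Poly_Mapping.lookup_sum)

lemma subspace_entries_vanishing: "oper.subspace {A. \<forall>b' b. P b' b \<longrightarrow> entry A b' b = 0}"
  by (rule oper.subspaceI) auto

definition diagonal :: "oper \<Rightarrow> bool" where
  "diagonal A \<longleftrightarrow> (\<forall>b' b. b' \<noteq> b \<longrightarrow> entry A b' b = 0)"

lemma diagonalD: "diagonal A \<Longrightarrow> b' \<noteq> b \<Longrightarrow> entry A b' b = 0"
  unfolding diagonal_def by blast

lemma subspace_diagonal: "oper.subspace {A. diagonal A}"
  unfolding diagonal_def by (rule subspace_entries_vanishing)

definition matrix_op :: "nat \<Rightarrow> nat \<Rightarrow> oper \<Rightarrow> bool" where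
  "matrix_op L LF A \<longleftrightarrow> A = lin_ext L LF (\<lambda>b. A (ev b))"

lemma lin_ext_ev: "lin_ext L LF f (ev b) = (if b \<in> Basis L LF then f b else 0)"
  unfolding lin_ext_def by (simp add: lookup_ev)

lemma lin_ext_cong: "(\<And>b. b \<in> Basis L LF \<Longrightarrow> f b = g b) \<Longrightarrow> lin_ext L LF f = lin_ext L LF g"
  unfolding lin_ext_def by (intro ext sum.cong) auto

lemma lin_ext_add: "lin_ext L LF (\<lambda>b. f b + g b) = lin_ext L LF f + lin_ext L LF g"
  unfolding lin_ext_def
  by (auto simp: fun_eq_iff sum.distrib[symmetric] vec.scale_right_distrib intro!: sum.cong)

lemma lin_ext_scale: "lin_ext L LF (\<lambda>b. cmul c (f b)) = scale_oper c (lin_ext L LF f)"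
  unfolding lin_ext_def scale_oper_def
  by (auto simp: fun_eq_iff vec.scale_sum_right mult.commute intro!: sum.cong)

lemma matrix_op_lin_ext: "matrix_op L LF (lin_ext L LF f)"
  unfolding matrix_op_def lin_ext_ev by (rule lin_ext_cong) simp

lemma subspace_matrix_op: "oper.subspace {A. matrix_op L LF A}"
proof (rule oper.subspaceI)
  show "0 \<in> {A. matrix_op L LF A}"
    using lin_ext_scale[of L LF 0 "\<lambda>_. 0"] by (simp add: matrix_op_def)
  show "A + B \<in> {A. matrix_op L LF A}"
    if "A \<in> {A. matrix_op L LF A}" "B \<in> {A. matrix_op L LF A}" for A B
    using that lin_ext_add[of L LF "\<lambda>b. A (ev b)" "\<lambda>b. B (ev b)"] by (simp add: matrix_op_def)
  show "scale_oper c A \<in> {A. matrix_op L LF A}" if "A \<in> {A. matrix_op L LF A}" for c A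
    using that lin_ext_scale[of L LF c "\<lambda>b. A (ev b)"] by (simp add: matrix_op_def scale_oper_def)
qed

lemma matrix_op_apply:
  "matrix_op L LF A \<Longrightarrow> A v = lin_ext L LF (\<lambda>b. A (ev b)) v"
  unfolding matrix_op_def by (rule fun_cong)

lemma matrix_op_outside_Basis: "matrix_op L LF A \<Longrightarrow> b \<notin> Basis L LF \<Longrightarrow> A (ev b) = 0"
  by (simp add: matrix_op_apply[of L LF A "ev b"] lin_ext_ev)

lemma matrix_op_eqI:
  assumes "matrix_op L LF A" "matrix_op L LF B" "\<And>b' b. entry A b' b = entry B b' b"
  shows "A = B"
proof -
  have columns: "A (ev b) = B (ev b)" for b
    using assms(3) by (intro poly_mapping_eqI) (simp add: entry_def)
  have "A = lin_ext L LF (\<lambda>b. A (ev b))"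
    using assms(1) by (simp only: matrix_op_def)
  also have "\<dots> = lin_ext L LF (\<lambda>b. B (ev b))"
    by (simp only: columns)
  also have "\<dots> = B"
    using assms(2) by (simp only: matrix_op_def)
  finally show ?thesis .
qed

lemma lookup_matrix_op_apply:
  assumes "matrix_op L LF A"
  shows "Poly_Mapping.lookup (A v) b'
    = (\<Sum>b\<in>Poly_Mapping.keys v. Poly_Mapping.lookup v b * entry A b' b)"
proof -
  have "A v = (\<Sum>b\<in>Poly_Mapping.keys v. cmul (Poly_Mapping.lookup v b) (A (ev b)))"
    unfolding matrix_op_apply[OF assms, of v] lin_ext_def
    using matrix_op_outside_Basis[OF assms] by (intro sum.cong) auto
  then show ?thesis
    by (simp add: Poly_Mapping.lookup_sum entry_def)
qed

lemma lookup_diagonal_apply: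
  assumes "matrix_op L LF A" "diagonal A"
  shows "Poly_Mapping.lookup (A v) b = entry A b b * Poly_Mapping.lookup v b"
proof -
  have "Poly_Mapping.lookup (A v) b
      = (\<Sum>b'\<in>Poly_Mapping.keys v. if b' = b then Poly_Mapping.lookup v b * entry A b b else 0)"
    unfolding lookup_matrix_op_apply[OF assms(1)]
    by (intro sum.cong) (auto simp: diagonalD[OF assms(2)])
  then show ?thesis
    by (simp add: in_keys_iff)
qed

lemma br_diagonal_eq_0:
  assumes "matrix_op L LF A" "diagonal A" "matrix_op L LF B" "diagonal B"
  shows "br A B = 0"
  unfolding br_def
  by (intro ext poly_mapping_eqI)
     (simp add: lookup_minus lookup_diagonal_apply[OF assms(1,2)]
      lookup_diagonal_apply[OF assms(3,4)])

lemma matrix_op_opF: "matrix_op L LF (opF L LF l1 l2 I J l3 l4)"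
  and matrix_op_opL: "matrix_op L LF (opL L LF l1 l2 I J)"
  and matrix_op_opR: "matrix_op L LF (opR L LF I J l1 l2)"
  and matrix_op_opS: "matrix_op L LF (opS L LF I J)"
  unfolding opF_def opL_def opR_def opS_def by (rule matrix_op_lin_ext)+

lemma matrix_op_gens: "g \<in> gens L LF \<Longrightarrow> matrix_op L LF g"
  unfolding gens_def by (auto intro: matrix_op_opF matrix_op_opL matrix_op_opR matrix_op_opS)

lemma entry_opF:
  "entry (opF L LF l1 l2 I J l3 l4) b' b =
     (if b \<in> Basis L LF \<and> b = (l2, J, l4) \<and> b' = (l1, I, l3) then 1 else 0)"
  by (cases b) (auto simp: opF_def entry_def lin_ext_ev lookup_ev)

lemma lookup_sum_nonzero:
  "Poly_Mapping.lookup (\<Sum>x\<in>S. f x) b \<noteq> 0 \<Longrightarrow> \<exists>x\<in>S. Poly_Mapping.lookup (f x) b \<noteq> 0"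
  unfolding Poly_Mapping.lookup_sum by (blast elim: sum.not_neutral_contains_not_neutral)

lemma entry_opL_nonzero:
  assumes "entry (opL L LF l1 l2 I J) b' b \<noteq> 0"
  shows "\<exists>K e. b = (l2, J @ K, e) \<and> b' = (l1, I @ K, e)"
proof -
  obtain a K e where b: "b = (a, K, e)" by (cases b)
  show ?thesis
    using assms unfolding b
    by (simp add: opL_def entry_def lin_ext_ev split: if_splits)
      (auto simp: lookup_ev split: if_splits dest!: lookup_sum_nonzero)
qed

lemma entry_opR_nonzero:
  assumes "entry (opR L LF I J l1 l2) b' b \<noteq> 0"
  shows "\<exists>a K. b = (a, K @ J, l2) \<and> b' = (a, K @ I, l1)"
proof -
  obtain a K e where b: "b = (a, K, e)" by (cases b)
  show ?thesis
    using assms unfolding b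
    by (simp add: opR_def entry_def lin_ext_ev split: if_splits)
      (auto simp: lookup_ev split: if_splits dest!: lookup_sum_nonzero)
qed

lemma entry_opS_nonzero:
  assumes "entry (opS L LF I J) b' b \<noteq> 0"
  shows "\<exists>a K1 K3 e. b = (a, K1 @ J @ K3, e) \<and> b' = (a, K1 @ I @ K3, e)"
proof -
  obtain a K e where b: "b = (a, K, e)" by (cases b)
  show ?thesis
    using assms unfolding b
    by (simp add: opS_def entry_def lin_ext_ev split: if_splits)
      (fastforce simp: lookup_ev split: if_splits dest!: lookup_sum_nonzero)
qed

lemma diagonalI: "(\<And>b' b. entry A b' b \<noteq> 0 \<Longrightarrow> b' = b) \<Longrightarrow> diagonal A"
  unfolding diagonal_def by blast

lemma diagonal_opF: "diagonal (opF L LF l1 l1 I I l2 l2)"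
  by (rule diagonalI) (simp add: entry_opF split: if_splits)

lemma diagonal_opL: "diagonal (opL L LF l l I I)"
  by (rule diagonalI) (auto dest!: entry_opL_nonzero)

lemma diagonal_opR: "diagonal (opR L LF I I l l)"
  by (rule diagonalI) (auto dest!: entry_opR_nonzero)

lemma diagonal_opS: "diagonal (opS L LF I I)"
  by (rule diagonalI) (auto dest!: entry_opS_nonzero)

lemma diagonal_gens00: "g \<in> gens00 L LF \<Longrightarrow> diagonal g"
  unfolding gens00_def by (auto intro: diagonal_opF diagonal_opL diagonal_opR diagonal_opS)

lemma opF_in_gens00:
  "l1 \<in> {1..LF} \<Longrightarrow> l2 \<in> {1..LF} \<Longrightarrow> isseq L I \<Longrightarrow> opF L LF l1 l1 I I l2 l2 \<in> gens00 L LF"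
  unfolding gens00_def by blast

lemma opL_in_gens00: "l \<in> {1..LF} \<Longrightarrow> isseq L I \<Longrightarrow> opL L LF l l I I \<in> gens00 L LF"
  unfolding gens00_def by blast

lemma gens00_subset_gens: "gens00 L LF \<subseteq> gens L LF"
  unfolding gens_def gens00_def by blast

lemma gens00_if_diagonal_entry_nonzero:
  assumes "g \<in> gens L LF" "entry g b b \<noteq> 0"
  shows "g \<in> gens00 L LF"
  using assms unfolding gens_def gens00_def
  by (auto simp: entry_opF split: if_splits
      dest!: entry_opL_nonzero entry_opR_nonzero entry_opS_nonzero)

lemma Ghat_matrix_op: "x \<in> Ghat L LF \<Longrightarrow> matrix_op L LF x"
  using oper.span_minimal[OF _ subspace_matrix_op, of "gens L LF" L LF] matrix_op_gens
  unfolding Ghat_def cspan_eq_span by blast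

lemma G00_subset_Ghat: "G00 L LF \<subseteq> Ghat L LF"
  unfolding G00_def Ghat_def cspan_eq_span by (rule oper.span_mono[OF gens00_subset_gens])

lemma G00_diagonal: "x \<in> G00 L LF \<Longrightarrow> diagonal x"
  using oper.span_minimal[OF _ subspace_diagonal, of "gens00 L LF"] diagonal_gens00
  unfolding G00_def cspan_eq_span by blast

lemma br_G00_eq_0: "x \<in> G00 L LF \<Longrightarrow> y \<in> G00 L LF \<Longrightarrow> br x y = 0"
  using G00_subset_Ghat Ghat_matrix_op G00_diagonal by (blast intro: br_diagonal_eq_0)

lemma lie_nilpotent_if_commuting:
  assumes "\<And>x y. x \<in> H \<Longrightarrow> y \<in> H \<Longrightarrow> br x y = 0"
  shows "lie_nilpotent H"
proof -
  have "{br x y | x y. x \<in> H \<and> y \<in> lcs H 0} \<subseteq> {0}"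
    using assms by auto
  then have "lcs H 1 \<subseteq> oper.span {0}"
    unfolding One_nat_def lcs.simps cspan_eq_span by (rule oper.span_mono)
  then have "lcs H 1 = {0}"
    using oper.span_zero[of "{br x y | x y. x \<in> H \<and> y \<in> lcs H 0}"]
    by (auto simp: cspan_eq_span)
  then show ?thesis
    unfolding lie_nilpotent_def zero_fun_def by blast
qed

lemma projector_in_G00:
  assumes "b \<in> Basis L LF"
  obtains P where "P \<in> G00 L LF" "P (ev b) = ev b"
    and "\<And>b'. b' \<noteq> b \<Longrightarrow> entry P b' b' = 0"
proof -
  obtain l1 I l2 where b: "b = (l1, I, l2)" "l1 \<in> {1..LF}" "l2 \<in> {1..LF}" "isseq L I"
    using assms unfolding Basis_def by auto
  define P where "P = opF L LF l1 l1 I I l2 l2"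
  have "P \<in> gens00 L LF"
    unfolding P_def using b(2-4) by (rule opF_in_gens00)
  then have "P \<in> G00 L LF"
    unfolding G00_def cspan_eq_span by (rule oper.span_base)
  moreover have "P (ev b) = ev b"
    using assms b
    by (intro poly_mapping_eqI) (simp add: P_def entry_opF lookup_ev flip: entry_def)
  moreover have "entry P b' b' = 0" if "b' \<noteq> b" for b'
    using that b by (simp add: P_def entry_opF)
  ultimately show thesis
    using that by blast
qed

lemma entry_br_projector:
  assumes "matrix_op L LF P" "diagonal P" "P (ev b) = ev b" "entry P b' b' = 0"
  shows "entry (br x P) b' b = entry x b' b"
proof -
  have "entry (br x P) b' b
      = Poly_Mapping.lookup (x (P (ev b))) b' - Poly_Mapping.lookup (P (x (ev b))) b'"
    by (simp add: entry_def br_def lookup_minus)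
  also have "\<dots> = entry x b' b"
    using assms by (simp add: lookup_diagonal_apply entry_def[of x])
  finally show ?thesis .
qed

lemma diagonal_if_normalizes_G00:
  assumes "x \<in> Ghat L LF" "\<And>h. h \<in> G00 L LF \<Longrightarrow> br x h \<in> G00 L LF"
  shows "diagonal x"
  unfolding diagonal_def
proof (intro allI impI)
  fix b' b :: bas
  assume "b' \<noteq> b"
  show "entry x b' b = 0"
  proof (cases "b \<in> Basis L LF")
    case False
    then show ?thesis
      using matrix_op_outside_Basis[OF Ghat_matrix_op[OF assms(1)]] by (simp add: entry_def)
  next
    case True
    obtain P where P: "P \<in> G00 L LF" "P (ev b) = ev b"
      and P_diagonal_entries: "\<And>b''. b'' \<noteq> b \<Longrightarrow> entry P b'' b'' = 0"
      using projector_in_G00[OF True] by blast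
    have "matrix_op L LF P"
      using P(1) G00_subset_Ghat Ghat_matrix_op by blast
    then have "entry x b' b = entry (br x P) b' b"
      using G00_diagonal[OF P(1)] P(2) P_diagonal_entries[OF \<open>b' \<noteq> b\<close>]
      by (simp add: entry_br_projector)
    also have "\<dots> = 0"
      using G00_diagonal[OF assms(2)[OF P(1)]] \<open>b' \<noteq> b\<close> by (rule diagonalD)
    finally show ?thesis .
  qed
qed

lemma diagonal_Ghat_in_G00:
  assumes "x \<in> Ghat L LF" "diagonal x"
  shows "x \<in> G00 L LF"
proof -
  have "oper.span (gens L LF) = oper.span (gens00 L LF \<union> (gens L LF - gens00 L LF))"
    using gens00_subset_gens by (simp add: Un_absorb1)
  then obtain y z where x: "x = y + z" and y: "y \<in> G00 L LF"
    and z: "z \<in> oper.span (gens L LF - gens00 L LF)"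
    using assms(1) unfolding Ghat_def G00_def cspan_eq_span oper.span_Un by blast
  have "oper.span (gens L LF - gens00 L LF) \<subseteq> {A. \<forall>b' b. b' = b \<longrightarrow> entry A b' b = 0}"
    using gens00_if_diagonal_entry_nonzero
    by (intro oper.span_minimal subspace_entries_vanishing) blast
  then have z_diagonal_entries: "entry z b b = 0" for b
    using z by blast
  have "z \<in> Ghat L LF"
    using z oper.span_mono[of "gens L LF - gens00 L LF" "gens L LF"]
    unfolding Ghat_def cspan_eq_span by blast
  moreover have "diagonal z"
    using oper.subspace_diff[OF subspace_diagonal, of x y] assms(2) G00_diagonal[OF y] x by simp
  moreover have "entry z b' b = entry 0 b' b" for b' b
    using z_diagonal_entries diagonalD[OF \<open>diagonal z\<close>] by (cases "b' = b") simp_all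
  ultimately have "z = 0"
    using Ghat_matrix_op oper.subspace_0[OF subspace_matrix_op] by (blast intro: matrix_op_eqI)
  then show ?thesis
    using x y by simp
qed

lemma finite_splits: "finite {(K1, K2). K1 @ K2 = K}"
  by (rule finite_subset[of _ "set (prefixes K) \<times> set (suffixes K)"]) (auto simp: suffix_def)

lemma entry_opL_diagonal:
  "entry (opL L LF l l I I) b b =
     (if b \<in> Basis L LF \<and> fst b = l \<and> prefix I (fst (snd b)) then 1 else 0)"
proof -
  obtain a K e where b: "b = (a, K, e)" by (cases b)
  have "(\<Sum>p\<in>{(K1, K2). K1 @ K2 = K}. Poly_Mapping.lookup
          (case p of (K1, K2) \<Rightarrow> if K1 = I then ev (l, I @ K2, e) else 0) (l, K, e))
      = (\<Sum>p\<in>{(K1, K2). K1 @ K2 = K}. if p = (I, drop (length I) K) then 1 else 0)"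
  proof (rule sum.cong)
    fix p
    assume "p \<in> {(K1, K2). K1 @ K2 = K}"
    then obtain K1 K2 where "p = (K1, K2)" "K = K1 @ K2"
      by blast
    then show "Poly_Mapping.lookup
          (case p of (K1, K2) \<Rightarrow> if K1 = I then ev (l, I @ K2, e) else 0) (l, K, e)
        = (if p = (I, drop (length I) K) then 1 else 0)"
      by (cases "K1 = I") (auto simp: lookup_ev)
  qed simp
  also have "\<dots> = (if prefix I K then 1 else 0)"
    using finite_splits[of K] by (simp add: prefix_def) (metis append_eq_conv_conj)
  finally show ?thesis
    unfolding b by (simp add: opL_def entry_def lin_ext_ev Poly_Mapping.lookup_sum)
qed

lemma opL_Nil_decomposition:
  "opL L LF l l [] [] =
     (\<Sum>i\<in>{1..L}. opL L LF l l [i] [i]) + (\<Sum>l'\<in>{1..LF}. opF L LF l l [] [] l' l')"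
proof (rule matrix_op_eqI)
  show "matrix_op L LF (opL L LF l l [] [])"
    by (rule matrix_op_opL)
  show "matrix_op L LF
      ((\<Sum>i\<in>{1..L}. opL L LF l l [i] [i]) + (\<Sum>l'\<in>{1..LF}. opF L LF l l [] [] l' l'))"
    by (intro oper.subspace_add[OF subspace_matrix_op, simplified]
        oper.subspace_sum[OF subspace_matrix_op, simplified] matrix_op_opL matrix_op_opF)
  fix b' b :: bas
  show "entry (opL L LF l l [] []) b' b =
      entry ((\<Sum>i\<in>{1..L}. opL L LF l l [i] [i]) + (\<Sum>l'\<in>{1..LF}. opF L LF l l [] [] l' l')) b' b"
  proof (cases "b' = b")
    case False
    then show ?thesis
      by (simp add: entry_sum diagonalD[OF diagonal_opL] diagonalD[OF diagonal_opF])
  next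
    case True
    obtain a K e where b: "b = (a, K, e)" by (cases b)
    have "(\<Sum>i\<in>{1..L}. entry (opL L LF l l [i] [i]) b b)
        = (if b \<in> Basis L LF \<and> a = l \<and> K \<noteq> [] then 1 else 0)"
    proof (cases "b \<in> Basis L LF \<and> a = l \<and> K \<noteq> []")
      case True
      then have "hd K \<in> {1..L}"
        unfolding b Basis_def isseq_def using hd_in_set by blast
      moreover have "prefix [i] K \<longleftrightarrow> hd K = i" for i
        using True by (cases K) auto
      ultimately show ?thesis
        using True by (simp add: entry_opL_diagonal b)
    qed (auto simp: entry_opL_diagonal b intro!: sum.neutral)
    moreover have "(\<Sum>l'\<in>{1..LF}. entry (opF L LF l l [] [] l' l') b b)
        = (if b \<in> Basis L LF \<and> a = l \<and> K = [] then 1 else 0)"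
    proof -
      have "e \<in> {1..LF}" if "b \<in> Basis L LF"
        using that unfolding b Basis_def by auto
      then show ?thesis
        by (auto simp: entry_opF b intro!: sum.neutral)
    qed
    ultimately show ?thesis
      using True by (auto simp: entry_sum entry_opL_diagonal b)
  qed
qed

lemma lin_dependent_gens00:
  assumes "L > 0" "LF > 0"
  shows "lin_dependent (gens00 L LF)"
proof -
  define A where "A = opL L LF 1 1 [] []"
  have one: "1 \<in> {1..L}" "1 \<in> {1..LF}"
    using assms by auto
  have "A \<in> gens00 L LF"
    unfolding A_def using one by (intro opL_in_gens00) (auto simp: isseq_def)
  have Basis: "(1, [], 1) \<in> Basis L LF" "(1, [1], 1) \<in> Basis L LF"
    using one by (auto simp: Basis_def isseq_def)
  have "opL L LF 1 1 [i] [i] \<in> gens00 L LF - {A}" if "i \<in> {1..L}" for i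
  proof -
    have "entry (opL L LF 1 1 [i] [i]) (1, [], 1) (1, [], 1) \<noteq> entry A (1, [], 1) (1, [], 1)"
      using Basis by (simp add: A_def entry_opL_diagonal)
    moreover have "opL L LF 1 1 [i] [i] \<in> gens00 L LF"
      using one that by (intro opL_in_gens00) (auto simp: isseq_def)
    ultimately show ?thesis
      by auto
  qed
  moreover have "opF L LF 1 1 [] [] l l \<in> gens00 L LF - {A}" if "l \<in> {1..LF}" for l
  proof -
    have "entry (opF L LF 1 1 [] [] l l) (1, [1], 1) (1, [1], 1)
        \<noteq> entry A (1, [1], 1) (1, [1], 1)"
      using Basis by (simp add: A_def entry_opL_diagonal entry_opF)
    moreover have "opF L LF 1 1 [] [] l l \<in> gens00 L LF"
      using one that by (intro opF_in_gens00) (auto simp: isseq_def)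
    ultimately show ?thesis
      by auto
  qed
  ultimately have "A \<in> oper.span (gens00 L LF - {A})"
    unfolding A_def opL_Nil_decomposition[of L LF 1] unfolding A_def[symmetric]
    by (intro oper.span_add oper.span_sum oper.span_base)
  then show ?thesis
    unfolding lin_dependent_iff_dependent oper.dependent_def
    using \<open>A \<in> gens00 L LF\<close> by blast
qed

lemma zero_in_G00: "0 \<in> G00 L LF"
  unfolding G00_def cspan_eq_span by (rule oper.span_zero)

lemma normalizer_G00: "normalizer (Ghat L LF) (G00 L LF) = G00 L LF"
proof
  show "normalizer (Ghat L LF) (G00 L LF) \<subseteq> G00 L LF"
    unfolding normalizer_def using diagonal_if_normalizes_G00 diagonal_Ghat_in_G00 by blast
  show "G00 L LF \<subseteq> normalizer (Ghat L LF) (G00 L LF)"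
    unfolding normalizer_def using G00_subset_Ghat br_G00_eq_0 zero_in_G00 by auto
qed

theorem proposition3:
  fixes L LF :: nat
  assumes "L > 0" and "LF > 0"
  shows "G00 L LF \<subseteq> Ghat L LF
    \<and> (\<forall>x\<in>G00 L LF. \<forall>y\<in>G00 L LF. br x y \<in> G00 L LF)
    \<and> lie_nilpotent (G00 L LF)
    \<and> normalizer (Ghat L LF) (G00 L LF) = G00 L LF
    \<and> lin_dependent (gens00 L LF)"
proof (intro conjI)
  show "G00 L LF \<subseteq> Ghat L LF"
    by (rule G00_subset_Ghat)
  show "\<forall>x\<in>G00 L LF. \<forall>y\<in>G00 L LF. br x y \<in> G00 L LF"
    by (simp add: br_G00_eq_0 zero_in_G00)
  show "lie_nilpotent (G00 L LF)"
    by (rule lie_nilpotent_if_commuting) (rule br_G00_eq_0)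
  show "normalizer (Ghat L LF) (G00 L LF) = G00 L LF"
    by (rule normalizer_G00)
  show "lin_dependent (gens00 L LF)"
    using assms by (rule lin_dependent_gens00)
qed

end
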